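(* Let $L$ be a normal incline and let $A\in M_n(L)$ be a symmetric matrix. Then the following are equivalent: (1) $A$ is positive semidefinite; (2) $A$ is completely positive; (3) every $2\times 2$ principal submatrix of $A$ has positive determinant greater than or equal to its negative determinant, i.e. $a_{ii}\otimes a_{jj}\ge a_{ij}\otimes a_{ji}$ for all $i,j$; (4) there exist a diagonal matrix $D\in M_n(L)$ and a symmetric matrix $M\in M_n(L)$ all of whose diagonal entries equal $\mathbf{1}$ such that $A=DMD$.
   Context: An incline is a nonempty set $L$ with binary operations $\oplus,\otimes$ such that $(L,\oplus)$ is a semilattice ($\oplus$ associative, commutative, idempotent), $(L,\otimes)$ is a semigroup, $x\otimes(y\oplus z)=(x\otimes y)\oplus(x\otimes z)$ and $x\oplus(x\otimes y)=x$ for all $x,y,z$. The order is $x\le y\iff x\oplus y=y$. $L$ is commutative if $\otimes$ is commutative. An r-ideal is a nonempty $J\subseteq L$ closed under $\oplus$ and under multiplication by arbitrary elements of $L$; a lattice ideal is a nonempty $J\subseteq L$ closed under $\oplus$ and downward closed for $\le$. A commutative incline $L$ is normal if it has an additive identity $\mathbf{0}$ and a multiplicative identity $\mathbf{1}$ and: (LI-property) every singly generated r-ideal of $L$ is a lattice ideal; (unique square root property) for every $x\in L$ there is a unique $c\in L$ with $c\otimes c=x$; (AG-property) $x\otimes y\le (x\otimes x)\oplus(y\otimes y)$ for all $x,y$. Matrices over $L$ are multiplied by $(BC)_{ij}=\bigoplus_k b_{ik}\otimes c_{kj}$ and added entrywise by $\oplus$; $B^T$ is the transpose. A matrix $A\in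 M_n(L)$ is positive semidefinite if $A=BB^T$ for some $n\times k$ matrix $B$ over $L$, and completely positive if moreover $B$ can be chosen with every entry a perfect square (of the form $c\otimes c$). For a $2\times 2$ matrix $\begin{bmatrix}p&q\\ r&s\end{bmatrix}$ the positive determinant is $p\otimes s$ and the negative determinant is $q\otimes r$. A diagonal matrix has all off-diagonal entries $\mathbf{0}$. *)

theory Defs
  imports Main
begin

locale incline =
  fixes add :: "'a \<Rightarrow> 'a \<Rightarrow> 'a" and mul :: "'a \<Rightarrow> 'a \<Rightarrow> 'a"
  assumes add_assoc: "add (add x y) z = add x (add y z)"
    and add_comm: "add x y = add y x"
    and add_idem: "add x x = x"
    and mul_assoc: "mul (mul x y) z = mul x (mul y z)"
    and distrib: "mul x (add y z) = add (mul x y) (mul x z)"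
    and absorb: "add x (mul x y) = x"

definition inc_le :: "('a \<Rightarrow> 'a \<Rightarrow> 'a) \<Rightarrow> 'a \<Rightarrow> 'a \<Rightarrow> bool" where
  "inc_le add x y \<longleftrightarrow> add x y = y"

definition r_ideal :: "('a \<Rightarrow> 'a \<Rightarrow> 'a) \<Rightarrow> ('a \<Rightarrow> 'a \<Rightarrow> 'a) \<Rightarrow> 'a set \<Rightarrow> bool" where
  "r_ideal add mul J \<longleftrightarrow> J \<noteq> {} \<and> (\<forall>x\<in>J. \<forall>y\<in>J. add x y \<in> J)
     \<and> (\<forall>x\<in>J. \<forall>y. mul y x \<in> J \<and> mul x y \<in> J)"

definition lattice_ideal :: "('a \<Rightarrow> 'a \<Rightarrow> 'a) \<Rightarrow> 'a set \<Rightarrow> bool" where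
  "lattice_ideal add J \<longleftrightarrow> J \<noteq> {} \<and> (\<forall>x\<in>J. \<forall>y\<in>J. add x y \<in> J)
     \<and> (\<forall>x\<in>J. \<forall>y. inc_le add y x \<longrightarrow> y \<in> J)"

definition gen_r_ideal :: "('a \<Rightarrow> 'a \<Rightarrow> 'a) \<Rightarrow> ('a \<Rightarrow> 'a \<Rightarrow> 'a) \<Rightarrow> 'a \<Rightarrow> 'a set" where
  "gen_r_ideal add mul a = \<Inter>{J. r_ideal add mul J \<and> a \<in> J}"

locale normal_incline = incline add mul
  for add :: "'a \<Rightarrow> 'a \<Rightarrow> 'a" and mul :: "'a \<Rightarrow> 'a \<Rightarrow> 'a" +
  fixes zero :: 'a and one :: 'a
  assumes mul_comm: "mul x y = mul y x"
    and add_zero: "add x zero = x"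
    and mul_one: "mul one x = x" and one_mul: "mul x one = x"
    and LI_property: "lattice_ideal add (gen_r_ideal add mul a)"
    and unique_sqrt: "\<exists>!c. mul c c = x"
    and AG_property: "inc_le add (mul x y) (add (mul x x) (mul y y))"

definition isum :: "('a \<Rightarrow> 'a \<Rightarrow> 'a) \<Rightarrow> 'a \<Rightarrow> nat \<Rightarrow> (nat \<Rightarrow> 'a) \<Rightarrow> 'a" where
  "isum add zero k f = foldr (\<lambda>i acc. add (f i) acc) [0..<k] zero"

text \<open>Matrices are functions nat => nat => 'a; only entries with indices below the
  stated dimensions are relevant. mat_mult with inner dimension k.\<close>
definition mat_mult :: "('a \<Rightarrow> 'a \<Rightarrow> 'a) \<Rightarrow> ('a \<Rightarrow> 'a \<Rightarrow> 'a) \<Rightarrow> 'a \<Rightarrow> nat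
    \<Rightarrow> (nat \<Rightarrow> nat \<Rightarrow> 'a) \<Rightarrow> (nat \<Rightarrow> nat \<Rightarrow> 'a) \<Rightarrow> nat \<Rightarrow> nat \<Rightarrow> 'a" where
  "mat_mult add mul zero k B C = (\<lambda>i j. isum add zero k (\<lambda>l. mul (B i l) (C l j)))"

definition mtrans :: "(nat \<Rightarrow> nat \<Rightarrow> 'a) \<Rightarrow> nat \<Rightarrow> nat \<Rightarrow> 'a" where
  "mtrans B = (\<lambda>i j. B j i)"

definition mat_eq :: "nat \<Rightarrow> (nat \<Rightarrow> nat \<Rightarrow> 'a) \<Rightarrow> (nat \<Rightarrow> nat \<Rightarrow> 'a) \<Rightarrow> bool" where
  "mat_eq n A B \<longleftrightarrow> (\<forall>i<n. \<forall>j<n. A i j = B i j)"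

definition symmetric_mat :: "nat \<Rightarrow> (nat \<Rightarrow> nat \<Rightarrow> 'a) \<Rightarrow> bool" where
  "symmetric_mat n A \<longleftrightarrow> (\<forall>i<n. \<forall>j<n. A i j = A j i)"

definition diagonal_mat :: "'a \<Rightarrow> nat \<Rightarrow> (nat \<Rightarrow> nat \<Rightarrow> 'a) \<Rightarrow> bool" where
  "diagonal_mat zero n D \<longleftrightarrow> (\<forall>i<n. \<forall>j<n. i \<noteq> j \<longrightarrow> D i j = zero)"

definition psd :: "('a \<Rightarrow> 'a \<Rightarrow> 'a) \<Rightarrow> ('a \<Rightarrow> 'a \<Rightarrow> 'a) \<Rightarrow> 'a \<Rightarrow> nat \<Rightarrow> (nat \<Rightarrow> nat \<Rightarrow> 'a) \<Rightarrow> bool" where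
  "psd add mul zero n A \<longleftrightarrow> (\<exists>k B. mat_eq n A (mat_mult add mul zero k B (mtrans B)))"

definition completely_positive :: "('a \<Rightarrow> 'a \<Rightarrow> 'a) \<Rightarrow> ('a \<Rightarrow> 'a \<Rightarrow> 'a) \<Rightarrow> 'a \<Rightarrow> nat \<Rightarrow> (nat \<Rightarrow> nat \<Rightarrow> 'a) \<Rightarrow> bool" where
  "completely_positive add mul zero n A \<longleftrightarrow> (\<exists>k B. mat_eq n A (mat_mult add mul zero k B (mtrans B))
      \<and> (\<forall>i<n. \<forall>l<k. \<exists>c. B i l = mul c c))"

end

theory Submission
  imports Defs
begin

text \<open>In a normal incline squaring is additive, \<open>(x \<oplus> y)\<^sup>2 = x\<^sup>2 \<oplus> y\<^sup>2\<close> by the AG-property,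
  so by uniqueness of square roots it reflects the order; and by the LI-property \<open>y \<le> a\<close>
  means \<open>y = a \<otimes> c\<close> for some \<open>c\<close>. Hence \<open>a\<^sub>i\<^sub>j\<^sup>2 \<le> a\<^sub>i\<^sub>i a\<^sub>j\<^sub>j = (\<surd>a\<^sub>i\<^sub>i \<surd>a\<^sub>j\<^sub>j)\<^sup>2\<close> yields
  \<open>a\<^sub>i\<^sub>j = \<surd>a\<^sub>i\<^sub>i \<surd>a\<^sub>j\<^sub>j m\<^sub>i\<^sub>j\<close>, i.e. \<open>A = DMD\<close>. Conversely \<open>DMD = BB\<^sup>T\<close> for a matrix \<open>B\<close> with
  one column per pair \<open>(p, q)\<close>; and every \<open>BB\<^sup>T\<close> satisfies
  the \<open>2 \<times> 2\<close> condition because the square of a sum is the sum of the squares.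
  Since every element is a square, positive semidefinite and completely positive coincide.\<close>

context incline begin

abbreviation le (infix "\<preceq>" 50) where "x \<preceq> y \<equiv> inc_le add x y"

lemma le_refl: "x \<preceq> x"
  by (simp add: inc_le_def add_idem)

lemma le_trans: "x \<preceq> y \<Longrightarrow> y \<preceq> z \<Longrightarrow> x \<preceq> z"
  unfolding inc_le_def by (metis add_assoc)

lemma le_antisym: "x \<preceq> y \<Longrightarrow> y \<preceq> x \<Longrightarrow> x = y"
  unfolding inc_le_def by (metis add_comm)

lemma add_least: "x \<preceq> z \<Longrightarrow> y \<preceq> z \<Longrightarrow> add x y \<preceq> z"
  unfolding inc_le_def by (metis add_assoc)

lemma le_add1: "x \<preceq> add x y"
  unfolding inc_le_def by (metis add_assoc add_idem)

lemma le_add2: "y \<preceq> add x y"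
  unfolding inc_le_def by (metis add_assoc add_idem add_comm)

lemma mul_le_left: "mul x y \<preceq> x"
  unfolding inc_le_def by (metis absorb add_comm)

lemma mul_mono_right: "x \<preceq> y \<Longrightarrow> mul z x \<preceq> mul z y"
  unfolding inc_le_def by (metis distrib)

lemma add_left_commute: "add x (add y z) = add y (add x z)"
  by (metis add_assoc add_comm)

lemma add_left_idem: "add x (add x y) = add x y"
  by (simp add: add_assoc[symmetric] add_idem)

end

context normal_incline begin

lemma mul_left_commute: "mul x (mul y z) = mul y (mul x z)"
  by (metis mul_assoc mul_comm)

lemmas mul_ac = mul_assoc mul_comm mul_left_commute

lemma mul_mono: "x \<preceq> y \<Longrightarrow> u \<preceq> v \<Longrightarrow> mul x u \<preceq> mul y v"
  by (metis le_trans mul_mono_right mul_comm)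

lemma zero_le: "zero \<preceq> x"
  unfolding inc_le_def by (metis add_zero add_comm)

lemma mul_zero_left: "mul zero x = zero"
  by (meson le_antisym mul_le_left zero_le)

lemma mul_zero_right: "mul x zero = zero"
  by (metis mul_comm mul_zero_left)

lemma mul_self_add: "mul (add x y) (add x y) = add (mul x x) (mul y y)"
proof -
  have "mul (add x y) (add x y) = add (add (mul x x) (mul x y)) (add (mul x y) (mul y y))"
    using distrib[of "add x y" x y] distrib[of x x y] distrib[of y x y] by (simp add: mul_comm)
  also have "\<dots> = add (add (mul x x) (mul y y)) (mul x y)"
    by (simp add: add_assoc add_comm add_left_commute add_left_idem)
  also have "\<dots> = add (mul x x) (mul y y)"
    using AG_property[of x y] unfolding inc_le_def by (metis add_comm)
  finally show ?thesis .
qed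

lemma mul_self_le_imp_le:
  assumes "mul x x \<preceq> mul y y"
  shows "x \<preceq> y"
proof -
  have "mul (add x y) (add x y) = mul y y"
    using assms unfolding inc_le_def mul_self_add .
  then show ?thesis
    unfolding inc_le_def using unique_sqrt[of "mul y y"] by blast
qed

lemma le_imp_mul_factor:
  assumes "y \<preceq> a"
  shows "\<exists>c. y = mul a c"
proof -
  let ?aL = "{mul a c |c. True}"
  have "r_ideal add mul ?aL"
    unfolding r_ideal_def
    by (auto simp: distrib[symmetric] mul_assoc, metis mul_left_commute)
  moreover have "a \<in> ?aL"
    using one_mul[of a, symmetric] by blast
  ultimately have "gen_r_ideal add mul a \<subseteq> ?aL"
    unfolding gen_r_ideal_def by blast
  moreover have "a \<in> gen_r_ideal add mul a"
    unfolding gen_r_ideal_def by blast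
  then have "y \<in> gen_r_ideal add mul a"
    using LI_property[of a] assms unfolding lattice_ideal_def by blast
  ultimately show ?thesis by blast
qed

lemma mul_self_le_imp_mul_factor: "mul x x \<preceq> mul y y \<Longrightarrow> \<exists>c. x = mul y c"
  by (rule le_imp_mul_factor[OF mul_self_le_imp_le])

definition sq_root :: "'a \<Rightarrow> 'a" where
  "sq_root x = (THE c. mul c c = x)"

lemma mul_self_sq_root: "mul (sq_root x) (sq_root x) = x"
  unfolding sq_root_def using theI'[OF unique_sqrt] .

lemma psd_iff_completely_positive:
  "psd add mul zero n A \<longleftrightarrow> completely_positive add mul zero n A"
  unfolding psd_def completely_positive_def by (metis mul_self_sq_root)

lemma foldr_add_shift:
  "foldr (\<lambda>i acc. add (f i) acc) xs z = add (foldr (\<lambda>i acc. add (f i) acc) xs zero) z"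
  by (induct xs) (simp_all add: add_assoc add_zero add_comm[of zero])

lemma isum_0: "isum add zero 0 f = zero"
  by (simp add: isum_def)

lemma isum_Suc: "isum add zero (Suc k) f = add (isum add zero k f) (f k)"
  unfolding isum_def by (simp, subst foldr_add_shift, simp add: add_zero)

lemma isum_least: "(\<And>l. l < k \<Longrightarrow> f l \<preceq> a) \<Longrightarrow> isum add zero k f \<preceq> a"
  by (induct k) (auto simp: isum_0 isum_Suc zero_le intro: add_least)

lemma le_isum: "l < k \<Longrightarrow> f l \<preceq> isum add zero k f"
  by (induct k) (auto simp: isum_Suc le_add2 less_Suc_eq intro: le_trans le_add1)

lemma isum_eqI:
  "(\<And>l. l < k \<Longrightarrow> f l \<preceq> a) \<Longrightarrow> l < k \<Longrightarrow> f l = a \<Longrightarrow> isum add zero k f = a"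
  by (metis isum_least le_isum le_antisym)

lemma isum_mul_self:
  "mul (isum add zero k f) (isum add zero k f) = isum add zero k (\<lambda>l. mul (f l) (f l))"
  by (induct k) (simp_all add: isum_0 isum_Suc mul_zero_left mul_self_add)

lemma mat_mult_diagonal_left:
  assumes "diagonal_mat zero n D" "i < n" "j < n"
  shows "mat_mult add mul zero n D M i j = mul (D i i) (M i j)"
  unfolding mat_mult_def
proof (rule isum_eqI[where l = i])
  show "mul (D i l) (M l j) \<preceq> mul (D i i) (M i j)" if "l < n" for l
    using assms that by (cases "l = i") (auto simp: diagonal_mat_def mul_zero_left zero_le le_refl)
qed (use assms in auto)

lemma mat_mult_diagonal_sandwich:
  assumes "diagonal_mat zero n D" "i < n" "j < n"
  shows "mat_mult add mul zero n (mat_mult add mul zero n D M) D i j = mul (mul (D i i) (M i j)) (D j j)"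
  unfolding mat_mult_def[of add mul zero n "mat_mult add mul zero n D M"]
proof (rule isum_eqI[where l = j])
  fix l assume "l < n"
  then show "mul (mat_mult add mul zero n D M i l) (D l j) \<preceq> mul (mul (D i i) (M i j)) (D j j)"
    using assms mat_mult_diagonal_left[OF assms(1,2)]
    by (cases "l = j") (auto simp: diagonal_mat_def mul_zero_right zero_le le_refl)
qed (use assms mat_mult_diagonal_left[OF assms(1,2)] in auto)

definition minor_dominant :: "nat \<Rightarrow> (nat \<Rightarrow> nat \<Rightarrow> 'a) \<Rightarrow> bool" where
  "minor_dominant n A \<longleftrightarrow> (\<forall>i<n. \<forall>j<n. mul (A i j) (A j i) \<preceq> mul (A i i) (A j j))"

definition diagonal_scaling :: "nat \<Rightarrow> (nat \<Rightarrow> nat \<Rightarrow> 'a) \<Rightarrow> bool" where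
  "diagonal_scaling n A \<longleftrightarrow> (\<exists>D M. diagonal_mat zero n D \<and> symmetric_mat n M \<and> (\<forall>i<n. M i i = one)
     \<and> mat_eq n A (mat_mult add mul zero n (mat_mult add mul zero n D M) D))"

lemma psd_imp_minor_dominant:
  assumes "psd add mul zero n A"
  shows "minor_dominant n A"
  unfolding minor_dominant_def
proof (intro allI impI)
  fix i j assume ij: "i < n" "j < n"
  obtain k B where "mat_eq n A (mat_mult add mul zero k B (mtrans B))"
    using assms unfolding psd_def by blast
  then have A: "A p q = isum add zero k (\<lambda>l. mul (B p l) (B q l))" if "p < n" "q < n" for p q
    using that unfolding mat_eq_def mat_mult_def mtrans_def by auto
  have "mul (A i j) (A j i) = isum add zero k (\<lambda>l. mul (mul (B i l) (B i l)) (mul (B j l) (B j l)))"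
    unfolding A[OF ij] A[OF ij(2,1)] mul_comm[of "B j _" "B i _"] isum_mul_self
    by (simp add: mul_ac)
  also have "\<dots> \<preceq> mul (A i i) (A j j)"
    unfolding A[OF ij(1,1)] A[OF ij(2,2)]
    by (intro isum_least mul_mono le_isum[where f = "\<lambda>l. mul (B _ l) (B _ l)"])
  finally show "mul (A i j) (A j i) \<preceq> mul (A i i) (A j j)" .
qed

lemma minor_dominant_imp_diagonal_scaling:
  assumes sym: "symmetric_mat n A" and dom: "minor_dominant n A"
  shows "diagonal_scaling n A"
proof -
  define d where "d i = sq_root (A i i)" for i
  have "\<exists>c. A i j = mul (mul (d i) (d j)) c" if "i < n" "j < n" for i j
  proof (rule mul_self_le_imp_mul_factor)
    have "mul (A i j) (A i j) = mul (A i j) (A j i)"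
      using sym that unfolding symmetric_mat_def by simp
    also have "\<dots> \<preceq> mul (A i i) (A j j)"
      using dom that unfolding minor_dominant_def by simp
    also have "\<dots> = mul (mul (d i) (d i)) (mul (d j) (d j))"
      unfolding d_def mul_self_sq_root ..
    also have "\<dots> = mul (mul (d i) (d j)) (mul (d i) (d j))"
      by (simp add: mul_ac)
    finally show "mul (A i j) (A i j) \<preceq> mul (mul (d i) (d j)) (mul (d i) (d j))" .
  qed
  then obtain c where c: "\<And>i j. i < n \<Longrightarrow> j < n \<Longrightarrow> A i j = mul (mul (d i) (d j)) (c i j)"
    by metis
  define M where "M i j = (if i = j then one else c (min i j) (max i j))" for i j
  define D where "D i j = (if i = j then d i else zero)" for i j
  have D: "diagonal_mat zero n D"
    unfolding diagonal_mat_def D_def by auto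
  have "A i j = mul (mul (D i i) (M i j)) (D j j)" if ij: "i < n" "j < n" for i j
  proof (cases "i = j")
    case True
    then show ?thesis
      unfolding M_def D_def d_def by (simp add: one_mul mul_self_sq_root)
  next
    case False
    have "A i j = A (min i j) (max i j)"
      using sym ij unfolding symmetric_mat_def by (cases "i < j") (auto simp: min_def max_def)
    also have "\<dots> = mul (mul (d (min i j)) (d (max i j))) (c (min i j) (max i j))"
      using ij by (intro c) auto
    also have "mul (d (min i j)) (d (max i j)) = mul (d i) (d j)"
      by (cases "i < j") (simp_all add: min_def max_def, metis mul_comm)
    finally have "A i j = mul (mul (d i) (d j)) (c (min i j) (max i j))" .
    then show ?thesis
      using False unfolding M_def D_def by (simp add: mul_ac)
  qed
  then have "mat_eq n A (mat_mult add mul zero n (mat_mult add mul zero n D M) D)"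
    unfolding mat_eq_def using mat_mult_diagonal_sandwich[OF D] by simp
  moreover have "symmetric_mat n M" "\<forall>i<n. M i i = one"
    unfolding symmetric_mat_def M_def by (auto simp: min.commute max.commute)
  ultimately show ?thesis
    unfolding diagonal_scaling_def using D by blast
qed

lemma div_mod_less_square: "(l::nat) < n * n \<Longrightarrow> l div n < n \<and> l mod n < n"
  by (metis less_mult_imp_div_less mod_less_divisor mult_eq_0_iff neq0_conv not_less_zero)

text \<open>Column \<open>l\<close> belongs to the pair \<open>(p, q) = (l div n, l mod n)\<close>; its only nonzero
  entries are \<open>D\<^sub>p\<^sub>p \<surd>M\<^sub>p\<^sub>q\<close> in row \<open>p\<close> and \<open>D\<^sub>q\<^sub>q \<surd>M\<^sub>p\<^sub>q\<close> in row \<open>q\<close>.\<close>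
definition pair_columns :: "nat \<Rightarrow> (nat \<Rightarrow> nat \<Rightarrow> 'a) \<Rightarrow> (nat \<Rightarrow> nat \<Rightarrow> 'a) \<Rightarrow> nat \<Rightarrow> nat \<Rightarrow> 'a" where
  "pair_columns n D M i l =
     (if i = l div n \<or> i = l mod n then mul (D i i) (sq_root (M (l div n) (l mod n))) else zero)"

lemma pair_columns_gram:
  fixes D M :: "nat \<Rightarrow> nat \<Rightarrow> 'a"
  assumes sym: "symmetric_mat n M" and one: "\<forall>i<n. M i i = one" and ij: "i < n" "j < n"
  defines "B \<equiv> pair_columns n D M"
  shows "isum add zero (n * n) (\<lambda>l. mul (B i l) (B j l)) = mul (mul (D i i) (M i j)) (D j j)"
proof (rule isum_eqI[where l = "i * n + j"])
  have "i * n + j < (i + 1) * n" using ij by simp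
  also have "\<dots> \<le> n * n" using ij by (intro mult_right_mono) auto
  finally show "i * n + j < n * n" .
  have "(i * n + j) div n = i" "(i * n + j) mod n = j" using ij by auto
  then show "mul (B i (i * n + j)) (B j (i * n + j)) = mul (mul (D i i) (M i j)) (D j j)"
    unfolding B_def pair_columns_def using mul_self_sq_root[of "M i j"] by (simp add: mul_ac)
next
  fix l assume "l < n * n"
  then have pq: "l div n < n" "l mod n < n" by (simp_all add: div_mod_less_square)
  show "mul (B i l) (B j l) \<preceq> mul (mul (D i i) (M i j)) (D j j)"
  proof (cases "{i, j} \<subseteq> {l div n, l mod n}")
    case False
    then have "B i l = zero \<or> B j l = zero" unfolding B_def pair_columns_def by auto
    then show ?thesis by (metis mul_zero_left mul_zero_right zero_le)
  next
    case True
    then have prod: "mul (B i l) (B j l) = mul (mul (D i i) (D j j)) (M (l div n) (l mod n))"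
      unfolding B_def pair_columns_def using mul_self_sq_root[of "M (l div n) (l mod n)"]
      by (auto simp: mul_ac)
    show ?thesis
    proof (cases "i = j")
      case True
      then show ?thesis
        unfolding prod using one ij by (simp add: one_mul mul_le_left)
    next
      case False
      then have "M (l div n) (l mod n) = M i j"
        using True sym pq ij unfolding symmetric_mat_def by auto
      then show ?thesis unfolding prod by (simp add: mul_ac le_refl)
    qed
  qed
qed

lemma diagonal_scaling_imp_psd:
  assumes "diagonal_scaling n A"
  shows "psd add mul zero n A"
proof -
  obtain D M where D: "diagonal_mat zero n D" and "symmetric_mat n M" "\<forall>i<n. M i i = one"
    and A: "mat_eq n A (mat_mult add mul zero n (mat_mult add mul zero n D M) D)"
    using assms unfolding diagonal_scaling_def by blast
  then have "mat_eq n A (mat_mult add mul zero (n * n) (pair_columns n D M) (mtrans (pair_columns n D M)))"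
    using pair_columns_gram mat_mult_diagonal_sandwich[OF D]
    unfolding mat_eq_def mat_mult_def[of _ _ _ "n * n"] mtrans_def by simp
  then show ?thesis unfolding psd_def by blast
qed

end

theorem mainTheorem3:
  fixes add mul :: "'a \<Rightarrow> 'a \<Rightarrow> 'a" and zero one :: 'a
    and n :: nat and A :: "nat \<Rightarrow> nat \<Rightarrow> 'a"
  assumes "normal_incline add mul zero one"
    and "symmetric_mat n A"
  shows "(psd add mul zero n A \<longleftrightarrow> completely_positive add mul zero n A)
    \<and> (completely_positive add mul zero n A \<longleftrightarrow>
         (\<forall>i<n. \<forall>j<n. inc_le add (mul (A i j) (A j i)) (mul (A i i) (A j j))))
    \<and> ((\<forall>i<n. \<forall>j<n. inc_le add (mul (A i j) (A j i)) (mul (A i i) (A j j))) \<longleftrightarrow>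
         (\<exists>D M. diagonal_mat zero n D \<and> symmetric_mat n M \<and> (\<forall>i<n. M i i = one)
            \<and> mat_eq n A (mat_mult add mul zero n (mat_mult add mul zero n D M) D)))"
proof -
  interpret normal_incline add mul zero one by fact
  have "psd add mul zero n A \<Longrightarrow> minor_dominant n A"
    by (rule psd_imp_minor_dominant)
  moreover have "minor_dominant n A \<Longrightarrow> diagonal_scaling n A"
    using assms(2) by (rule minor_dominant_imp_diagonal_scaling)
  moreover have "diagonal_scaling n A \<Longrightarrow> psd add mul zero n A"
    by (rule diagonal_scaling_imp_psd)
  ultimately show ?thesis
    unfolding minor_dominant_def[symmetric] diagonal_scaling_def[symmetric]
      psd_iff_completely_positive[symmetric]
    by blast
qed

end
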